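(* Let $\mathcal{G}$ be a lattice of languages over a finite alphabet $A$ and $\tau:2^{A^*}\to Q$ a nice rating map. Let $S\subseteq Q$ be the set of all $s\in Q$ such that $\{\varepsilon\}$ is not $\mathcal{G}$-separable from $\tau_*^{-1}(s)$. Then $\iota_{\mathcal{G}}[\tau]=\sum_{s\in S}s$.
   Context: Fix a finite alphabet $A$. A lattice is a class of languages containing $\emptyset$ and $A^*$ and closed under union and intersection. $L_1$ is $\mathcal{G}$-separable from $L_2$ if some $K\in\mathcal{G}$ satisfies $L_1\subseteq K$ and $K\cap L_2=\emptyset$. A rating algebra is a finite commutative idempotent monoid $(Q,+)$ with neutral element $0_Q$, ordered by $q\le r$ iff $q+r=r$. A rating map is $\tau:2^{A^*}\to Q$ with $\tau(\emptyset)=0_Q$ and $\tau(K_1\cup K_2)=\tau(K_1)+\tau(K_2)$; it is nice if every $K\subseteq A^*$ has a finite subset $F$ with $\tau(K)=\tau(F)$. $\tau_*:A^*\to Q$ is $w\mapsto\tau(\{w\})$. A $\mathcal{G}$-identity is a language $L\in\mathcal{G}$ with $\varepsilon\in L$; there exists a $\mathcal{G}$-identity $L$ with $\tau(L)\le\tau(L')$ for every $\mathcal{G}$-identity $L'$, and $\iota_{\mathcal{G}}[\tau]$ denotes $\tau(L)$ for any such $L$. *)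

theory Defs
  imports Main
begin

text \<open>The rating algebra is a finite commutative idempotent monoid, modelled as a
  type of class comm_monoid_add and finite with an idempotency assumption.\<close>

definition lattice_of_langs :: "'a list set set \<Rightarrow> bool" where
  "lattice_of_langs G \<longleftrightarrow> {} \<in> G \<and> UNIV \<in> G \<and>
     (\<forall>K1\<in>G. \<forall>K2\<in>G. K1 \<union> K2 \<in> G \<and> K1 \<inter> K2 \<in> G)"

definition separable :: "'a list set set \<Rightarrow> 'a list set \<Rightarrow> 'a list set \<Rightarrow> bool" where
  "separable G L1 L2 \<longleftrightarrow> (\<exists>K\<in>G. L1 \<subseteq> K \<and> K \<inter> L2 = {})"

definition idempotent_monoid :: "'q::comm_monoid_add itself \<Rightarrow> bool" where
  "idempotent_monoid _ \<longleftrightarrow> (\<forall>q::'q. q + q = q)"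

definition rle :: "'q::comm_monoid_add \<Rightarrow> 'q \<Rightarrow> bool" where
  "rle q r \<longleftrightarrow> q + r = r"

definition rating_map :: "('a list set \<Rightarrow> 'q::comm_monoid_add) \<Rightarrow> bool" where
  "rating_map \<tau> \<longleftrightarrow> \<tau> {} = 0 \<and> (\<forall>K1 K2. \<tau> (K1 \<union> K2) = \<tau> K1 + \<tau> K2)"

definition nice :: "('a list set \<Rightarrow> 'q::comm_monoid_add) \<Rightarrow> bool" where
  "nice \<tau> \<longleftrightarrow> (\<forall>K. \<exists>F. finite F \<and> F \<subseteq> K \<and> \<tau> K = \<tau> F)"

definition tau_star :: "('a list set \<Rightarrow> 'q) \<Rightarrow> 'a list \<Rightarrow> 'q" where
  "tau_star \<tau> w = \<tau> {w}"

definition G_identity :: "'a list set set \<Rightarrow> 'a list set \<Rightarrow> bool" where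
  "G_identity G L \<longleftrightarrow> L \<in> G \<and> [] \<in> L"

definition iota :: "'a list set set \<Rightarrow> ('a list set \<Rightarrow> 'q::comm_monoid_add) \<Rightarrow> 'q" where
  "iota G \<tau> = (THE q. \<exists>L. G_identity G L \<and> \<tau> L = q \<and>
                        (\<forall>L'. G_identity G L' \<longrightarrow> rle (\<tau> L) (\<tau> L')))"

end

theory Submission
  imports Defs
begin

text \<open>In an idempotent commutative monoid the sum of a finite set is its least upper bound, and
  a nice rating map satisfies \<open>\<tau> K = \<Sum> \<tau>\<^sub>* ` K\<close>. So \<open>\<iota>\<^sub>\<G>[\<tau>]\<close> is the sum of
  \<open>\<tau>\<^sub>* ` L\<close> for an optimal \<open>\<G>\<close>-identity \<open>L\<close>. Every \<open>\<G>\<close>-identity meets each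
  \<open>\<tau>\<^sub>*\<^sup>-\<^sup>1(s)\<close> with \<open>s \<in> S\<close>, so its image contains \<open>S\<close>; conversely, intersecting one separator
  for each of the finitely many \<open>s \<notin> S\<close> gives a \<open>\<G>\<close>-identity whose image is exactly \<open>S\<close>.\<close>

lemma rle_antisym:
  fixes a b :: "'q::comm_monoid_add"
  assumes "rle a b" "rle b a"
  shows "a = b"
  using assms by (metis add.commute rle_def)

lemma sum_rle_bound:
  fixes f :: "'b \<Rightarrow> 'q::comm_monoid_add"
  assumes "finite F" "\<forall>w\<in>F. rle (f w) x"
  shows "rle (sum f F) x"
  using assms
proof (induction F rule: finite_induct)
  case empty
  then show ?case by (simp add: rle_def)
next
  case (insert w F)
  then have "sum f (insert w F) + x = f w + (sum f F + x)" by (simp add: add.assoc)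
  also have "\<dots> = x" using insert by (simp add: rle_def)
  finally show ?case by (simp add: rle_def)
qed

lemma member_rle_sum:
  fixes f :: "'b \<Rightarrow> 'q::comm_monoid_add"
  assumes "idempotent_monoid TYPE('q)" "finite A" "a \<in> A"
  shows "rle (f a) (sum f A)"
proof -
  have "sum f A = f a + sum f (A - {a})" using assms(2,3) by (simp add: sum.remove)
  then show ?thesis using assms(1) unfolding idempotent_monoid_def rle_def by (metis add.assoc)
qed

lemma sum_rle_mono_subset:
  fixes f :: "'b \<Rightarrow> 'q::comm_monoid_add"
  assumes "idempotent_monoid TYPE('q)" "finite B" "A \<subseteq> B"
  shows "rle (sum f A) (sum f B)"
  using assms by (intro sum_rle_bound) (auto intro: member_rle_sum finite_subset)

lemma rating_map_mono:
  assumes "rating_map \<tau>" "K1 \<subseteq> K2"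
  shows "rle (\<tau> K1) (\<tau> K2)"
proof -
  have "\<tau> (K1 \<union> K2) = \<tau> K1 + \<tau> K2" using assms(1) by (simp add: rating_map_def)
  then show ?thesis using assms(2) by (simp add: rle_def Un_absorb1)
qed

lemma rating_map_finite_sum:
  assumes "rating_map \<tau>" "finite F"
  shows "\<tau> F = (\<Sum>w\<in>F. tau_star \<tau> w)"
  using assms(2)
proof (induction F rule: finite_induct)
  case empty
  then show ?case using assms(1) by (simp add: rating_map_def)
next
  case (insert w F)
  have "\<tau> (insert w F) = \<tau> {w} + \<tau> F"
    using assms(1) insert_is_Un[of w F] unfolding rating_map_def by metis
  then show ?case using insert by (simp add: tau_star_def)
qed

lemma nice_rating_map_eq_sum_image:
  fixes \<tau> :: "'a list set \<Rightarrow> 'q::{comm_monoid_add, finite}"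
  assumes idem: "idempotent_monoid TYPE('q)" and "rating_map \<tau>" "nice \<tau>"
  shows "\<tau> K = (\<Sum>q\<in>tau_star \<tau> ` K. q)"
proof (rule rle_antisym)
  obtain F where F: "finite F" "F \<subseteq> K" "\<tau> K = \<tau> F"
    using \<open>nice \<tau>\<close> unfolding nice_def by blast
  have "rle (\<Sum>w\<in>F. tau_star \<tau> w) (\<Sum>q\<in>tau_star \<tau> ` K. q)"
    using F(1,2) member_rle_sum[OF idem, where f = "\<lambda>q. q"]
    by (intro sum_rle_bound) (auto simp: tau_star_def)
  then show "rle (\<tau> K) (\<Sum>q\<in>tau_star \<tau> ` K. q)"
    using F rating_map_finite_sum[OF \<open>rating_map \<tau>\<close>] by simp
  show "rle (\<Sum>q\<in>tau_star \<tau> ` K. q) (\<tau> K)"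
    using rating_map_mono[OF \<open>rating_map \<tau>\<close>] by (intro sum_rle_bound) (auto simp: tau_star_def)
qed

lemma lattice_of_langs_Inter_closed:
  assumes "lattice_of_langs G" "finite I" "\<forall>i\<in>I. f i \<in> G"
  shows "\<Inter>(f ` I) \<in> G"
  using assms(2,3)
  by (induction I rule: finite_induct) (use assms(1) in \<open>auto simp: lattice_of_langs_def\<close>)

definition nonseparable_values :: "'a list set set \<Rightarrow> ('a list set \<Rightarrow> 'q) \<Rightarrow> 'q set" where
  "nonseparable_values G \<tau> = {s. \<not> separable G {[]} (tau_star \<tau> -` {s})}"

lemma nonseparable_values_subset_image:
  assumes "G_identity G L"
  shows "nonseparable_values G \<tau> \<subseteq> tau_star \<tau> ` L"
  using assms unfolding nonseparable_values_def separable_def G_identity_def by blast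

lemma G_identity_with_image_nonseparable_values:
  fixes \<tau> :: "'a list set \<Rightarrow> 'q::finite"
  assumes "lattice_of_langs G"
  obtains L where "G_identity G L" "tau_star \<tau> ` L = nonseparable_values G \<tau>"
proof -
  let ?S = "nonseparable_values G \<tau>"
  have "\<exists>K. K \<in> G \<and> [] \<in> K \<and> (\<forall>w\<in>K. tau_star \<tau> w \<noteq> s)" if "s \<notin> ?S" for s
    using that unfolding nonseparable_values_def separable_def by blast
  then obtain sep where sep: "\<And>s. s \<notin> ?S \<Longrightarrow> sep s \<in> G \<and> [] \<in> sep s \<and> (\<forall>w\<in>sep s. tau_star \<tau> w \<noteq> s)"
    by metis
  define L where "L = (\<Inter>s\<in>-?S. sep s)"
  have L_in: "L \<in> G"
    unfolding L_def using sep by (intro lattice_of_langs_Inter_closed[OF assms finite]) simp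
  have eps_in: "[] \<in> L"
    unfolding L_def using sep by simp
  have image_sub: "tau_star \<tau> ` L \<subseteq> ?S"
    unfolding L_def using sep by blast
  have L_id: "G_identity G L"
    using L_in eps_in by (simp add: G_identity_def)
  show ?thesis
    by (rule that[OF L_id subset_antisym[OF image_sub nonseparable_values_subset_image[OF L_id]]])
qed

lemma iota_eqI:
  assumes "G_identity G L" "\<forall>L'. G_identity G L' \<longrightarrow> rle (\<tau> L) (\<tau> L')"
  shows "iota G \<tau> = \<tau> L"
  unfolding iota_def
proof (rule the_equality)
  fix q
  assume "\<exists>L'. G_identity G L' \<and> \<tau> L' = q \<and> (\<forall>L''. G_identity G L'' \<longrightarrow> rle (\<tau> L') (\<tau> L''))"
  then show "q = \<tau> L"
    using assms by (metis rle_antisym)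
qed (use assms in blast)

theorem lemma10p3:
  fixes G :: "('a::finite) list set set"
    and \<tau> :: "'a list set \<Rightarrow> 'q::{comm_monoid_add, finite}"
  assumes "idempotent_monoid TYPE('q)"
    and "lattice_of_langs G"
    and "rating_map \<tau>"
    and "nice \<tau>"
  shows "iota G \<tau> =
    (\<Sum>s\<in>{s. \<not> separable G {[]} (tau_star \<tau> -` {s})}. s)"
proof -
  let ?S = "nonseparable_values G \<tau>"
  note image_sum = nice_rating_map_eq_sum_image[OF assms(1,3,4)]
  obtain L where L: "G_identity G L" "tau_star \<tau> ` L = ?S"
    using G_identity_with_image_nonseparable_values[OF assms(2)] .
  have "rle (\<tau> L) (\<tau> L')" if "G_identity G L'" for L'
  proof -
    have "rle (\<Sum>q\<in>?S. q) (\<Sum>q\<in>tau_star \<tau> ` L'. q)"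
      by (rule sum_rle_mono_subset[OF assms(1) finite nonseparable_values_subset_image[OF that]])
    then show ?thesis
      using L(2) by (simp only: image_sum)
  qed
  then have "iota G \<tau> = \<tau> L"
    using iota_eqI L(1) by blast
  then show ?thesis
    using L(2) by (simp add: image_sum nonseparable_values_def)
qed

end
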